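(* For every integer $s\ge1$, let $M_s^\star=(A-LC)^{s-1}L\in\mathbb R^{n\times p}$. Then $\|M_s^\star\|\le\kappa_F^2\gamma_F^{s-1}$ and $\|M_s^\star\|_F\le\sqrt{\min\{p,n\}}\,\kappa_F^2\gamma_F^{s-1}$. Moreover, for every integer $h\ge1$, the matrix $M^\star=[M_1^\star,\dots,M_h^\star]\in\mathbb R^{n\times ph}$ satisfies $\|M^\star\|_F\le\sqrt{\min\{p,n\}}\frac{\kappa_F^2}{1-\gamma_F}$.
   Context: Standing setup. Consider the discrete-time LTI system $x_{t+1}=Ax_t+w_t$, $y_t=Cx_t+v_t$ ($t\ge0$) with $x_t\in\mathbb R^n$, $y_t\in\mathbb R^p$, $x_0=0$, $w_t\overset{iid}{\sim}\mathcal N(0,W)$, $v_t\overset{iid}{\sim}\mathcal N(0,V)$, the two noise sequences independent. Assume $(A,W^{1/2})$ is stabilizable and $(A,C)$ is detectable. Let $\Sigma\succeq0$ be the unique positive semidefinite solution of $\Sigma=A\Sigma A^\top-A\Sigma C^\top(C\Sigma C^\top+V)^{-1}C\Sigma A^\top+W$ and $L=A\Sigma C^\top(C\Sigma C^\top+V)^{-1}$. Known constants $\alpha_0,\alpha_1,\psi,\bar\sigma>0$ satisfy $\alpha_0I_n\preceq W\preceq\alpha_1I_n$, $\alpha_0I_p\preceq V\preceq\alpha_1I_p$, $\|C\|\le\psi$, $\|\Sigma\|\le\bar\sigma$. Set $\kappa_F=\sqrt{\bar\sigma/\alpha_0}$ and $\gamma_F=1-\frac{\alpha_0}{2\bar\sigma}$.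 $\|\cdot\|$ is the Euclidean/spectral norm and $\|\cdot\|_F$ the Frobenius norm. *)

theory Defs
  imports "HOL-Analysis.Analysis"
begin

text \<open>The norm of a matrix of type real^'c^'r is the Frobenius norm; the spectral norm
  is the operator norm of the induced linear map.\<close>

primrec matpow :: "real^'n^'n \<Rightarrow> nat \<Rightarrow> real^'n^'n" where
  "matpow M 0 = mat 1"
| "matpow M (Suc k) = M ** matpow M k"

definition spec_norm :: "real^'c^'r \<Rightarrow> real" where
  "spec_norm M = onorm (\<lambda>x. M *v x)"

definition frob_norm :: "real^'c^'r \<Rightarrow> real" where
  "frob_norm M = sqrt (\<Sum>i\<in>UNIV. \<Sum>j\<in>UNIV. (M $ i $ j)^2)"

definition psd :: "real^'n^'n \<Rightarrow> bool" where
  "psd S \<longleftrightarrow> transpose S = S \<and> (\<forall>x. 0 \<le> x \<bullet> (S *v x))"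

definition loewner_le :: "real^'n^'n \<Rightarrow> real^'n^'n \<Rightarrow> bool" where
  "loewner_le X Y \<longleftrightarrow> psd (Y - X)"

definition msqrt :: "real^'n^'n \<Rightarrow> real^'n^'n" where
  "msqrt W = (THE B. psd B \<and> B ** B = W)"

definition schur_stable :: "real^'n^'n \<Rightarrow> bool" where
  "schur_stable M \<longleftrightarrow> (\<lambda>k. matpow M k) \<longlonglongrightarrow> 0"

definition stabilizable :: "real^'n^'n \<Rightarrow> real^'m^'n \<Rightarrow> bool" where
  "stabilizable A B \<longleftrightarrow> (\<exists>K :: real^'n^'m. schur_stable (A + B ** K))"

definition detectable :: "real^'n^'n \<Rightarrow> real^'n^'p \<Rightarrow> bool" where
  "detectable A C \<longleftrightarrow> (\<exists>L :: real^'p^'n. schur_stable (A - L ** C))"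

text \<open>Horizontal concatenation [M 1, ..., M h] of n x p blocks, as an n x (p h) matrix given
  by its entries: column (s, j) (s in {1..h}, j a column of block s) is column (s-1)p + j.\<close>
definition hcat_entry :: "(nat \<Rightarrow> real^'p^'n) \<Rightarrow> 'n \<Rightarrow> nat \<times> 'p \<Rightarrow> real" where
  "hcat_entry Ms i c = Ms (fst c) $ i $ snd c"

definition hcat_frob_norm :: "(nat \<Rightarrow> real^'p^'n) \<Rightarrow> nat \<Rightarrow> real" where
  "hcat_frob_norm Ms h = sqrt (\<Sum>i\<in>UNIV. \<Sum>c\<in>{1..h} \<times> UNIV. (hcat_entry Ms i c)^2)"

end

theory Submission
  imports Defs
begin

(* With F = A - L C, the Riccati equation together with L (C Sigma C^T + V) = A Sigma C^T
   becomes the Lyapunov equation Sigma = F Sigma F^T + L V L^T + W.  Hence Q x = x^T Sigma x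
   satisfies Q (F^T x) + alpha0 |x|^2 <= Q x <= sigma |x|^2 and alpha0 |L^T x|^2 <= Q x, so Q
   decays along x -> F^T x at rate 1 - alpha0/sigma and
   |(F^k L)^T x|^2 <= (sigma/alpha0) (1 - alpha0/sigma)^k |x|^2.  As sigma/alpha0 >= 1 and
   sqrt (1 - alpha0/sigma) <= 1 - alpha0/(2 sigma), this gives ||F^k L|| <= kappa^2 gamma^k.
   The Frobenius bounds follow from ||M||_F <= sqrt (min p n) ||M|| and a geometric series. *)

lemma transpose_diff: "transpose (A - B) = transpose A - transpose (B :: 'a::ring_1^'n^'m)"
  by (simp add: transpose_def vec_eq_iff)

lemma matrix_add_rdistrib: "(A + B) ** C = A ** C + B ** (C :: 'a::semiring_1^'p^'n)"
  by (simp add: matrix_matrix_mult_def vec_eq_iff distrib_right sum.distrib)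

lemma matrix_diff_rdistrib: "(A - B) ** C = A ** C - B ** (C :: 'a::ring_1^'p^'n)"
  by (simp add: matrix_matrix_mult_def vec_eq_iff left_diff_distrib sum_subtractf)

lemma matrix_diff_ldistrib: "A ** (B - C) = A ** B - A ** (C :: 'a::ring_1^'p^'n)"
  by (simp add: matrix_matrix_mult_def vec_eq_iff right_diff_distrib sum_subtractf)

lemma inner_transpose_matrix_vector: "(transpose M *v x) \<bullet> y = x \<bullet> ((M :: real^'n^'m) *v y)"
  by (simp add: dot_lmul_matrix)

lemma inner_congruence:
  "x \<bullet> ((M ** S ** transpose M) *v x) = (transpose M *v x) \<bullet> (S *v (transpose M *v (x :: real^'m)))"
  by (simp only: inner_transpose_matrix_vector matrix_vector_mul_assoc matrix_mul_assoc)

lemma matrix_inv_left: "invertible A \<Longrightarrow> matrix_inv A ** A = mat 1"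
  unfolding invertible_def matrix_inv_def by (rule someI2_ex) auto

lemma invertible_if_coercive:
  fixes S :: "real^'n^'n"
  assumes "\<And>x. a * norm x ^ 2 \<le> x \<bullet> (S *v x)" and "0 < a"
  shows "invertible S"
  unfolding invertible_left_inverse matrix_left_invertible_ker
proof (intro allI impI)
  fix x assume "S *v x = 0"
  then have "a * norm x ^ 2 \<le> 0" using assms(1)[of x] by simp
  with \<open>0 < a\<close> show "x = 0" by (simp add: mult_le_0_iff)
qed

lemma loewner_le_scaled_identityD:
  assumes "loewner_le (a *\<^sub>R mat 1) W"
  shows "a * norm x ^ 2 \<le> x \<bullet> (W *v x)"
proof -
  have "0 \<le> x \<bullet> ((W - a *\<^sub>R mat 1) *v x)"
    using assms by (simp add: loewner_le_def psd_def)
  also have "\<dots> = x \<bullet> (W *v x) - a * norm x ^ 2"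
    by (simp add: matrix_vector_mult_diff_rdistrib inner_diff_right power2_norm_eq_inner
        flip: scaleR_matrix_vector_assoc)
  finally show ?thesis by simp
qed

lemma transpose_matpow_mult_vector:
  "transpose (matpow F k) *v x = ((\<lambda>y. transpose F *v y) ^^ k) (x :: real^'n)"
proof (induction k arbitrary: x)
  case (Suc k)
  have "transpose (matpow F (Suc k)) *v x = transpose (matpow F k) *v (transpose F *v x)"
    by (simp only: matpow.simps matrix_transpose_mul matrix_vector_mul_assoc)
  then show ?case by (simp only: Suc.IH funpow_Suc_right comp_def)
qed simp

lemma norm_le_spec_norm: "norm ((M :: real^'c^'r) *v x) \<le> spec_norm M * norm x"
  unfolding spec_norm_def by (rule onorm) simp

lemma spec_norm_le: "(\<And>x. norm ((M :: real^'c^'r) *v x) \<le> c * norm x) \<Longrightarrow> spec_norm M \<le> c"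
  unfolding spec_norm_def by (rule onorm_le)

lemma spec_norm_nonneg: "0 \<le> spec_norm (M :: real^'c^'r)"
  unfolding spec_norm_def by (rule onorm_pos_le) simp

lemma spec_norm_transpose_le: "spec_norm (transpose M) \<le> spec_norm (M :: real^'c^'r)"
proof (rule spec_norm_le)
  fix y
  let ?z = "transpose M *v y"
  have "norm ?z ^ 2 = (M *v ?z) \<bullet> y"
    by (simp only: power2_norm_eq_inner inner_transpose_matrix_vector inner_commute)
  also have "\<dots> \<le> norm (M *v ?z) * norm y" by (rule norm_cauchy_schwarz)
  also have "\<dots> \<le> spec_norm M * norm ?z * norm y"
    by (simp add: mult_right_mono norm_le_spec_norm)
  finally have "norm ?z * norm ?z \<le> (spec_norm M * norm y) * norm ?z"
    by (simp add: power2_eq_square mult_ac)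
  then show "norm ?z \<le> spec_norm M * norm y"
    using spec_norm_nonneg[of M] by (cases "norm ?z = 0") simp_all
qed

lemma spec_norm_transpose: "spec_norm (transpose M) = spec_norm (M :: real^'c^'r)"
  using spec_norm_transpose_le[of M] spec_norm_transpose_le[of "transpose M"] by simp

lemma quadratic_form_le_spec_norm: "x \<bullet> ((M :: real^'n^'n) *v x) \<le> spec_norm M * norm x ^ 2"
proof -
  have "x \<bullet> (M *v x) \<le> norm x * norm (M *v x)" by (rule norm_cauchy_schwarz)
  also have "\<dots> \<le> norm x * (spec_norm M * norm x)" by (simp add: mult_left_mono norm_le_spec_norm)
  finally show ?thesis by (simp add: power2_eq_square mult_ac)
qed

lemma spec_norm_ge_if_coercive:
  fixes M :: "real^'n^'n"
  assumes "\<And>x. a * norm x ^ 2 \<le> x \<bullet> (M *v x)"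
  shows "a \<le> spec_norm M"
proof -
  define e :: "real^'n" where "e = axis undefined 1"
  have "norm e = 1" by (simp add: e_def)
  then show ?thesis using assms[of e] quadratic_form_le_spec_norm[of e M] by simp
qed

lemma frob_norm_nonneg: "0 \<le> frob_norm M"
  unfolding frob_norm_def by (intro real_sqrt_ge_zero sum_nonneg zero_le_power2)

lemma norm_column_power2: "norm ((M :: real^'c^'r) *v axis j 1) ^ 2 = (\<Sum>i\<in>UNIV. (M $ i $ j) ^ 2)"
  by (simp only: power2_norm_eq_inner matrix_vector_mult_basis)
    (simp add: column_def inner_vec_def power2_eq_square)

lemma norm_row_power2: "norm (transpose (M :: real^'c^'r) *v axis i 1) ^ 2 = (\<Sum>j\<in>UNIV. (M $ i $ j) ^ 2)"
  by (simp only: power2_norm_eq_inner matrix_vector_mult_basis)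
    (simp add: column_def transpose_def inner_vec_def power2_eq_square)

lemma frob_norm_le_spec_norm:
  "frob_norm (M :: real^'c^'r) \<le> sqrt (real (min CARD('c) CARD('r))) * spec_norm M"
proof -
  let ?ss = "\<Sum>i\<in>UNIV. \<Sum>j\<in>UNIV. (M $ i $ j) ^ 2"
  have column_bound: "norm (M *v axis j 1) ^ 2 \<le> spec_norm M ^ 2" for j
    using norm_le_spec_norm[of M "axis j 1"] by (simp add: power_mono)
  have row_bound: "norm (transpose M *v axis i 1) ^ 2 \<le> spec_norm M ^ 2" for i
    using norm_le_spec_norm[of "transpose M" "axis i 1"] by (simp add: power_mono spec_norm_transpose)
  have "?ss = (\<Sum>j\<in>UNIV. norm (M *v axis j 1) ^ 2)"
    by (simp only: norm_column_power2) (rule sum.swap)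
  also have "\<dots> \<le> (\<Sum>j\<in>(UNIV :: 'c set). spec_norm M ^ 2)"
    by (rule sum_mono) (rule column_bound)
  finally have by_columns: "?ss \<le> real CARD('c) * spec_norm M ^ 2" by simp
  have "?ss = (\<Sum>i\<in>UNIV. norm (transpose M *v axis i 1) ^ 2)"
    by (simp only: norm_row_power2)
  also have "\<dots> \<le> (\<Sum>i\<in>(UNIV :: 'r set). spec_norm M ^ 2)"
    by (rule sum_mono) (rule row_bound)
  finally have by_rows: "?ss \<le> real CARD('r) * spec_norm M ^ 2" by simp
  have "?ss \<le> real (min CARD('c) CARD('r)) * spec_norm M ^ 2"
    using by_columns by_rows by (cases "CARD('c) \<le> CARD('r)") (simp_all add: min_def)
  then have "frob_norm M \<le> sqrt (real (min CARD('c) CARD('r)) * spec_norm M ^ 2)"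
    unfolding frob_norm_def by (rule real_sqrt_le_mono)
  then show ?thesis by (simp only: real_sqrt_mult real_sqrt_abs abs_of_nonneg[OF spec_norm_nonneg])
qed

lemma hcat_frob_norm_eq: "hcat_frob_norm Ms h = sqrt (\<Sum>s\<in>{1..h}. frob_norm (Ms s) ^ 2)"
proof -
  have frob_sq: "frob_norm (Ms s) ^ 2 = (\<Sum>i\<in>UNIV. \<Sum>j\<in>UNIV. (Ms s $ i $ j) ^ 2)" for s
    unfolding frob_norm_def by (rule real_sqrt_pow2) (intro sum_nonneg zero_le_power2)
  have "(\<Sum>i\<in>UNIV. \<Sum>c\<in>{1..h} \<times> UNIV. (hcat_entry Ms i c) ^ 2)
      = (\<Sum>s\<in>{1..h}. \<Sum>i\<in>UNIV. \<Sum>j\<in>UNIV. (Ms s $ i $ j) ^ 2)"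
    unfolding hcat_entry_def sum.cartesian_product' fst_conv snd_conv by (rule sum.swap)
  then show ?thesis
    unfolding hcat_frob_norm_def frob_sq by (simp only:)
qed

lemma sum_power2_le_inverse_square:
  fixes g :: real
  assumes "0 \<le> g" "g < 1"
  shows "(\<Sum>s\<in>{1..h}. (g ^ (s - 1)) ^ 2) \<le> 1 / (1 - g) ^ 2"
proof -
  have g2: "0 \<le> g ^ 2" "g ^ 2 < 1"
    using assms by (auto simp: abs_square_less_1)
  have "(\<Sum>s\<in>{1..h}. (g ^ (s - 1)) ^ 2) = (\<Sum>k<h. (g ^ 2) ^ k)"
    by (simp add: sum.atLeast1_atMost_eq flip: power_mult) (simp add: mult.commute)
  also have "\<dots> \<le> (\<Sum>k. (g ^ 2) ^ k)"
    using g2 by (intro sum_le_suminf summable_geometric) auto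
  also have "\<dots> = 1 / (1 - g ^ 2)"
    using g2 by (simp add: suminf_geometric)
  also have "\<dots> \<le> 1 / (1 - g) ^ 2"
  proof (rule frac_le)
    show "0 < (1 - g) ^ 2" using assms by simp
    show "(1 - g) ^ 2 \<le> 1 - g ^ 2"
      using assms by (simp add: power2_eq_square algebra_simps mult_right_le_one_le)
  qed simp_all
  finally show ?thesis .
qed

lemma hcat_frob_norm_le_geometric:
  fixes Ms :: "nat \<Rightarrow> real^'p^'n"
  assumes "\<And>s. 1 \<le> s \<Longrightarrow> frob_norm (Ms s) \<le> c * g ^ (s - 1)"
    and "0 \<le> c" "0 \<le> g" "g < 1"
  shows "hcat_frob_norm Ms h \<le> c / (1 - g)"
proof -
  have "(\<Sum>s\<in>{1..h}. frob_norm (Ms s) ^ 2) \<le> (\<Sum>s\<in>{1..h}. c ^ 2 * (g ^ (s - 1)) ^ 2)"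
    using assms(1) by (intro sum_mono) (simp add: power_mono frob_norm_nonneg flip: power_mult_distrib)
  also have "\<dots> = c ^ 2 * (\<Sum>s\<in>{1..h}. (g ^ (s - 1)) ^ 2)"
    by (simp add: sum_distrib_left)
  also have "\<dots> \<le> c ^ 2 * (1 / (1 - g) ^ 2)"
    using sum_power2_le_inverse_square[OF assms(3,4)] by (rule mult_left_mono) simp
  also have "\<dots> = (c / (1 - g)) ^ 2"
    by (simp add: power_divide)
  finally show ?thesis
    unfolding hcat_frob_norm_eq using assms(2-4) by (intro real_le_lsqrt) auto
qed

lemma riccati_closed_loop:
  fixes A \<Sigma> :: "real^'n^'n" and C :: "real^'n^'p" and V :: "real^'p^'p" and L :: "real^'p^'n"
  assumes gain: "L ** (C ** \<Sigma> ** transpose C + V) = A ** \<Sigma> ** transpose C"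
  shows "(A - L ** C) ** \<Sigma> ** transpose (A - L ** C) + L ** V ** transpose L
    = A ** \<Sigma> ** transpose A - L ** C ** \<Sigma> ** transpose A"
proof -
  have "L ** C ** \<Sigma> ** transpose (L ** C) + L ** V ** transpose L
      = L ** (C ** \<Sigma> ** transpose C + V) ** transpose L"
    by (simp add: matrix_add_ldistrib matrix_add_rdistrib matrix_transpose_mul matrix_mul_assoc)
  also have "\<dots> = A ** \<Sigma> ** transpose (L ** C)"
    by (simp add: gain matrix_transpose_mul matrix_mul_assoc)
  finally have "L ** C ** \<Sigma> ** transpose (L ** C) + L ** V ** transpose L
      = A ** \<Sigma> ** transpose (L ** C)" .
  then show ?thesis
    by (simp add: transpose_diff matrix_diff_ldistrib matrix_diff_rdistrib algebra_simps)
qed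

lemma riccati_lyapunov_form:
  fixes A \<Sigma> W :: "real^'n^'n" and C :: "real^'n^'p" and V :: "real^'p^'p" and L :: "real^'p^'n"
  assumes riccati: "\<Sigma> = A ** \<Sigma> ** transpose A
        - A ** \<Sigma> ** transpose C ** matrix_inv (C ** \<Sigma> ** transpose C + V) ** C ** \<Sigma> ** transpose A + W"
    and gain: "L = A ** \<Sigma> ** transpose C ** matrix_inv (C ** \<Sigma> ** transpose C + V)"
    and "psd \<Sigma>" "loewner_le (a *\<^sub>R mat 1) V" "0 < a"
  shows "\<Sigma> = (A - L ** C) ** \<Sigma> ** transpose (A - L ** C) + L ** V ** transpose L + W"
proof -
  let ?S = "C ** \<Sigma> ** transpose C + V"
  have "invertible ?S"
  proof (rule invertible_if_coercive[OF _ \<open>0 < a\<close>])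
    fix x
    show "a * norm x ^ 2 \<le> x \<bullet> (?S *v x)"
      using loewner_le_scaled_identityD[OF assms(4), of x] \<open>psd \<Sigma>\<close> inner_congruence[of x C \<Sigma>]
      by (simp add: psd_def matrix_vector_mult_add_rdistrib inner_add_right add_increasing)
  qed
  then have "L ** ?S = A ** \<Sigma> ** transpose C"
    by (simp add: gain matrix_inv_left flip: matrix_mul_assoc)
  then have "(A - L ** C) ** \<Sigma> ** transpose (A - L ** C) + L ** V ** transpose L
      = A ** \<Sigma> ** transpose A - L ** C ** \<Sigma> ** transpose A"
    by (rule riccati_closed_loop)
  then show ?thesis
    using riccati by (simp add: gain)
qed

lemma lyapunov_decay:
  fixes Q :: "'a::real_normed_vector \<Rightarrow> real" and T :: "'a \<Rightarrow> 'a"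
  assumes decrease: "\<And>x. Q (T x) + a * norm x ^ 2 \<le> Q x"
    and bound: "\<And>x. Q x \<le> \<sigma> * norm x ^ 2"
    and "0 < a" "a \<le> \<sigma>"
  shows "Q ((T ^^ k) x) \<le> (1 - a / \<sigma>) ^ k * Q x"
proof -
  have contraction: "Q (T x) \<le> (1 - a / \<sigma>) * Q x" for x
  proof -
    have "a / \<sigma> * Q x \<le> a / \<sigma> * (\<sigma> * norm x ^ 2)"
      using bound[of x] assms(3,4) by (intro mult_left_mono) auto
    then show ?thesis
      using decrease[of x] assms(3,4) by (simp add: algebra_simps)
  qed
  show ?thesis
  proof (induction k arbitrary: x)
    case (Suc k)
    have "Q ((T ^^ Suc k) x) \<le> (1 - a / \<sigma>) ^ k * Q (T x)"
      unfolding funpow_Suc_right comp_def by (rule Suc.IH)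
    also have "\<dots> \<le> (1 - a / \<sigma>) ^ k * ((1 - a / \<sigma>) * Q x)"
      using contraction[of x] assms(3,4) by (intro mult_left_mono) auto
    finally show ?case by (simp add: mult_ac)
  qed simp
qed

lemma lyapunov_quadratic_form:
  fixes F \<Sigma> W :: "real^'n^'n" and L :: "real^'p^'n" and V :: "real^'p^'p"
  assumes lyap: "\<Sigma> = F ** \<Sigma> ** transpose F + L ** V ** transpose L + W"
    and "psd \<Sigma>" "loewner_le (a *\<^sub>R mat 1) W" "loewner_le (a *\<^sub>R mat 1) V" "0 \<le> a"
  shows "(transpose F *v x) \<bullet> (\<Sigma> *v (transpose F *v x)) + a * norm x ^ 2 \<le> x \<bullet> (\<Sigma> *v x)"
    and "a * norm (transpose L *v x) ^ 2 \<le> x \<bullet> (\<Sigma> *v x)"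
    and "a * norm x ^ 2 \<le> x \<bullet> (\<Sigma> *v x)"
proof -
  have split: "x \<bullet> (\<Sigma> *v x) = (transpose F *v x) \<bullet> (\<Sigma> *v (transpose F *v x))
      + (transpose L *v x) \<bullet> (V *v (transpose L *v x)) + x \<bullet> (W *v x)"
    by (subst lyap) (simp only: matrix_vector_mult_add_rdistrib inner_add_right inner_congruence)
  have "0 \<le> (transpose F *v x) \<bullet> (\<Sigma> *v (transpose F *v x))"
    using \<open>psd \<Sigma>\<close> by (simp add: psd_def)
  moreover have "a * norm (transpose L *v x) ^ 2 \<le> (transpose L *v x) \<bullet> (V *v (transpose L *v x))"
    using assms(4) by (rule loewner_le_scaled_identityD)
  moreover have "a * norm x ^ 2 \<le> x \<bullet> (W *v x)"
    using assms(3) by (rule loewner_le_scaled_identityD)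
  moreover have "0 \<le> a * norm x ^ 2"
    using \<open>0 \<le> a\<close> by simp
  moreover have "0 \<le> a * norm (transpose L *v x) ^ 2"
    using \<open>0 \<le> a\<close> by simp
  ultimately show "(transpose F *v x) \<bullet> (\<Sigma> *v (transpose F *v x)) + a * norm x ^ 2 \<le> x \<bullet> (\<Sigma> *v x)"
    and "a * norm (transpose L *v x) ^ 2 \<le> x \<bullet> (\<Sigma> *v x)"
    and "a * norm x ^ 2 \<le> x \<bullet> (\<Sigma> *v x)"
    unfolding split by linarith+
qed

lemma sqrt_contraction_rate_le:
  fixes a \<sigma> :: real
  assumes "0 < a" "a \<le> \<sigma>"
  shows "sqrt (\<sigma> / a * (1 - a / \<sigma>) ^ k) \<le> \<sigma> / a * (1 - a / (2 * \<sigma>)) ^ k"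
proof -
  have ratio: "1 \<le> \<sigma> / a" using assms by simp
  then have ratio_sq: "\<sigma> / a \<le> (\<sigma> / a) ^ 2"
    using mult_left_mono[of 1 "\<sigma> / a" "\<sigma> / a"] by (simp add: power2_eq_square)
  have rate: "0 \<le> 1 - a / \<sigma>" "1 - a / \<sigma> \<le> (1 - a / (2 * \<sigma>)) ^ 2"
    using assms by (auto simp: power2_eq_square field_simps)
  have "\<sigma> / a * (1 - a / \<sigma>) ^ k \<le> (\<sigma> / a) ^ 2 * ((1 - a / (2 * \<sigma>)) ^ 2) ^ k"
    using ratio ratio_sq rate by (intro mult_mono power_mono) auto
  also have "\<dots> = (\<sigma> / a * (1 - a / (2 * \<sigma>)) ^ k) ^ 2"
  proof -
    have "((1 - a / (2 * \<sigma>)) ^ 2) ^ k = ((1 - a / (2 * \<sigma>)) ^ k) ^ 2"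
      by (simp only: power_mult[symmetric] mult.commute)
    then show ?thesis by (simp only: power_mult_distrib)
  qed
  moreover have "0 \<le> 1 - a / (2 * \<sigma>)"
    using assms by simp
  ultimately show ?thesis
    using assms by (intro real_le_lsqrt) auto
qed

lemma lyapunov_gain_decay:
  fixes F \<Sigma> W :: "real^'n^'n" and L :: "real^'p^'n" and V :: "real^'p^'p"
  assumes lyap: "\<Sigma> = F ** \<Sigma> ** transpose F + L ** V ** transpose L + W"
    and "psd \<Sigma>" "loewner_le (a *\<^sub>R mat 1) W" "loewner_le (a *\<^sub>R mat 1) V"
    and "spec_norm \<Sigma> \<le> \<sigma>" "0 < a" "a \<le> \<sigma>"
  shows "spec_norm (matpow F k ** L) \<le> \<sigma> / a * (1 - a / (2 * \<sigma>)) ^ k"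
proof -
  let ?Q = "\<lambda>x. x \<bullet> (\<Sigma> *v x)" and ?\<rho> = "1 - a / \<sigma>"
  note form = lyapunov_quadratic_form[OF lyap assms(2-4) less_imp_le[OF \<open>0 < a\<close>]]
  have rate: "0 \<le> ?\<rho>" using \<open>0 < a\<close> \<open>a \<le> \<sigma>\<close> by simp
  have bound: "?Q x \<le> \<sigma> * norm x ^ 2" for x
    using quadratic_form_le_spec_norm[of x \<Sigma>] \<open>spec_norm \<Sigma> \<le> \<sigma>\<close>
    by (meson mult_right_mono order_trans zero_le_power2)
  have decay: "?Q (transpose (matpow F k) *v x) \<le> ?\<rho> ^ k * ?Q x" for x
    unfolding transpose_matpow_mult_vector
    using form(1) bound \<open>0 < a\<close> \<open>a \<le> \<sigma>\<close> by (rule lyapunov_decay)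
  have "norm (transpose (matpow F k ** L) *v x) \<le> sqrt (\<sigma> / a * ?\<rho> ^ k) * norm x" for x
  proof -
    define z where "z = transpose (matpow F k) *v x"
    have "a * norm (transpose L *v z) ^ 2 \<le> ?Q z" by (rule form(2))
    also have "\<dots> \<le> ?\<rho> ^ k * ?Q x" unfolding z_def by (rule decay)
    also have "\<dots> \<le> ?\<rho> ^ k * (\<sigma> * norm x ^ 2)"
      using bound[of x] rate by (intro mult_left_mono) auto
    finally have "a * norm (transpose L *v z) ^ 2 \<le> ?\<rho> ^ k * (\<sigma> * norm x ^ 2)" .
    then have "norm (transpose L *v z) ^ 2 \<le> (sqrt (\<sigma> / a * ?\<rho> ^ k) * norm x) ^ 2"
      using \<open>0 < a\<close> \<open>a \<le> \<sigma>\<close> by (simp add: power_mult_distrib field_simps)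
    then have "norm (transpose L *v z) \<le> sqrt (\<sigma> / a * ?\<rho> ^ k) * norm x"
      by (rule power2_le_imp_le) (use rate \<open>0 < a\<close> \<open>a \<le> \<sigma>\<close> in simp)
    then show ?thesis
      by (simp only: z_def matrix_transpose_mul matrix_vector_mul_assoc)
  qed
  then have "spec_norm (matpow F k ** L) \<le> sqrt (\<sigma> / a * ?\<rho> ^ k)"
    by (subst spec_norm_transpose[symmetric]) (rule spec_norm_le)
  also have "\<dots> \<le> \<sigma> / a * (1 - a / (2 * \<sigma>)) ^ k"
    using \<open>0 < a\<close> \<open>a \<le> \<sigma>\<close> by (rule sqrt_contraction_rate_le)
  finally show ?thesis .
qed

theorem lemma1:
  fixes A W \<Sigma> :: "real^'n^'n" and C :: "real^'n^'p" and V :: "real^'p^'p"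
    and L :: "real^'p^'n"
    and \<alpha>\<^sub>0 \<alpha>\<^sub>1 \<psi> \<sigma> \<kappa> \<gamma> :: real
  assumes stab: "stabilizable A (msqrt W)"
    and detect: "detectable A C"
    and Sigma_psd: "psd \<Sigma>"
    and DARE: "\<Sigma> = A ** \<Sigma> ** transpose A
        - A ** \<Sigma> ** transpose C ** matrix_inv (C ** \<Sigma> ** transpose C + V) ** C ** \<Sigma> ** transpose A + W"
    and L_def: "L = A ** \<Sigma> ** transpose C ** matrix_inv (C ** \<Sigma> ** transpose C + V)"
    and pos: "\<alpha>\<^sub>0 > 0" "\<alpha>\<^sub>1 > 0" "\<psi> > 0" "\<sigma> > 0"
    and W_lb: "loewner_le (\<alpha>\<^sub>0 *\<^sub>R mat 1) W" and W_ub: "loewner_le W (\<alpha>\<^sub>1 *\<^sub>R mat 1)"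
    and V_lb: "loewner_le (\<alpha>\<^sub>0 *\<^sub>R mat 1) V" and V_ub: "loewner_le V (\<alpha>\<^sub>1 *\<^sub>R mat 1)"
    and C_bd: "spec_norm C \<le> \<psi>"
    and Sigma_bd: "spec_norm \<Sigma> \<le> \<sigma>"
    and kappa_def: "\<kappa> = sqrt (\<sigma> / \<alpha>\<^sub>0)"
    and gamma_def: "\<gamma> = 1 - \<alpha>\<^sub>0 / (2 * \<sigma>)"
  shows "(\<forall>s::nat. s \<ge> 1 \<longrightarrow>
            spec_norm (matpow (A - L ** C) (s - 1) ** L) \<le> \<kappa>^2 * \<gamma>^(s - 1)
          \<and> frob_norm (matpow (A - L ** C) (s - 1) ** L)
              \<le> sqrt (real (min CARD('p) CARD('n))) * \<kappa>^2 * \<gamma>^(s - 1))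
       \<and> (\<forall>h::nat. h \<ge> 1 \<longrightarrow>
            hcat_frob_norm (\<lambda>s. matpow (A - L ** C) (s - 1) ** L) h
              \<le> sqrt (real (min CARD('p) CARD('n))) * \<kappa>^2 / (1 - \<gamma>))"
proof -
  let ?F = "A - L ** C" and ?m = "sqrt (real (min CARD('p) CARD('n)))"
  have lyap: "\<Sigma> = ?F ** \<Sigma> ** transpose ?F + L ** V ** transpose L + W"
    using DARE L_def Sigma_psd V_lb pos(1) by (rule riccati_lyapunov_form)
  have "\<alpha>\<^sub>0 \<le> \<sigma>"
    using lyapunov_quadratic_form(3)[OF lyap Sigma_psd W_lb V_lb] spec_norm_ge_if_coercive Sigma_bd pos(1)
    by (meson less_imp_le order_trans)
  moreover have "\<kappa>^2 = \<sigma> / \<alpha>\<^sub>0"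
    using pos by (simp add: kappa_def)
  ultimately have spec: "spec_norm (matpow ?F k ** L) \<le> \<kappa>^2 * \<gamma>^k" for k
    unfolding gamma_def by (metis lyapunov_gain_decay[OF lyap Sigma_psd W_lb V_lb Sigma_bd pos(1)])
  have frob: "frob_norm (matpow ?F k ** L) \<le> ?m * \<kappa>^2 * \<gamma>^k" for k
  proof -
    have "frob_norm (matpow ?F k ** L) \<le> ?m * spec_norm (matpow ?F k ** L)"
      by (rule frob_norm_le_spec_norm)
    also have "\<dots> \<le> ?m * (\<kappa>^2 * \<gamma>^k)"
      using spec by (rule mult_left_mono) simp
    finally show ?thesis by (simp only: mult.assoc)
  qed
  have "0 \<le> \<gamma>" "\<gamma> < 1"
    using \<open>\<alpha>\<^sub>0 \<le> \<sigma>\<close> pos by (auto simp: gamma_def)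
  then have "hcat_frob_norm (\<lambda>s. matpow ?F (s - 1) ** L) h \<le> ?m * \<kappa>^2 / (1 - \<gamma>)" for h
    using frob by (intro hcat_frob_norm_le_geometric) auto
  with spec frob show ?thesis by blast
qed

end
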